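(* Let $\mathbf H\in\mathbb R^{N\times L}$ and $\mathbf G=[\mathbf g_1,\dots,\mathbf g_M]\in\mathbb R^{N\times M}$ with $\operatorname{rank}([\mathbf H\ \mathbf G])=L+M$. Perform the recursive differencing procedure described in the context, with arbitrary admissible choices of reference indices $j_1,\dots,j_M$ (assuming that at every step $k$ the vector $\mathbf g_k^{(k-1)}$ has at least two nonzero entries), and let $\boldsymbol\Gamma=\boldsymbol\Gamma^{(M)}\cdots\boldsymbol\Gamma^{(1)}$. Then $\boldsymbol\Gamma\in\mathbb R^{(N-M)\times N}$ has full row rank, $\boldsymbol\Gamma\mathbf G=\mathbf 0$, and with $\mathbf P=(\boldsymbol\Gamma\boldsymbol\Gamma^T)^{-1/2}\boldsymbol\Gamma$ the differential estimate $$\hat{\mathbf x}_d=(\mathbf H^T\mathbf P^T\mathbf P\mathbf H)^{-1}\mathbf H^T\mathbf P^T\mathbf P\mathbf y$$ is well defined and equals $\hat{\mathbf x}_{\mathrm{jls}}=(\mathbf H^T\mathbf P_{\mathbf G}^\perp\mathbf H)^{-1}\mathbf H^T\mathbf P_{\mathbf G}^\perp\mathbf y$ for every $\mathbf y\in\mathbb R^N$. In particular $\hat{\mathbf x}_d$ does not depend on the choice of the reference indices $j_1,\dots,j_M$.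
   Context: Recursive differencing procedure: set $\mathbf g_i^{(0)}=\mathbf g_i$ for $i=1,\dots,M$. For $k=1,\dots,M$, let $\mathbf v=\mathbf g_k^{(k-1)}\in\mathbb R^{N-k+1}$, let $Z=\{i:v_i=0\}$ and $S=\{i:v_i\neq0\}$, and choose a reference index $j=j_k\in S$. Define $\boldsymbol\Gamma^{(k)}\in\mathbb R^{(N-k)\times(N-k+1)}$ as the matrix whose rows (listed in increasing order of $i$) are $\mathbf e_i^T$ for $i\in Z$ and $\mathbf e_i^T/v_i-\mathbf e_j^T/v_j$ for $i\in S\setminus\{j\}$, where $\mathbf e_i$ are standard basis vectors of $\mathbb R^{N-k+1}$; that is, the $k$-th step maps a vector $\mathbf d$ to the vector keeping the entries $d_i$, $i\in Z$, and replacing the others by $d_i/v_i-d_j/v_j$, $i\in S\setminus\{j\}$. Then set $\mathbf g_i^{(k)}=\boldsymbol\Gamma^{(k)}\mathbf g_i^{(k-1)}$ for all $i$. $\mathbf P_{\mathbf G}^\perp=\mathbf I_N-\mathbf G(\mathbf G^T\mathbf G)^{-1}\mathbf G^T$; $(\cdot)^{-1/2}$ is the inverse symmetric positive definite square root. *)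

theory Defs
  imports "Jordan_Normal_Form.Matrix" "Jordan_Normal_Form.DL_Rank"
begin

text \<open>Matrices are Jordan_Normal_Form matrices over the reals; all indices are 0-based.\<close>

definition mat_inv :: "real mat \<Rightarrow> real mat" where
  "mat_inv A = (THE B. B \<in> carrier_mat (dim_row A) (dim_row A) \<and> A * B = 1\<^sub>m (dim_row A)
                      \<and> B * A = 1\<^sub>m (dim_row A))"

definition spd_mat :: "nat \<Rightarrow> real mat \<Rightarrow> bool" where
  "spd_mat n S \<longleftrightarrow> S \<in> carrier_mat n n \<and> transpose_mat S = S \<and>
      (\<forall>x \<in> carrier_vec n. x \<noteq> 0\<^sub>v n \<longrightarrow> x \<bullet> (S *\<^sub>v x) > 0)"

text \<open>S is the inverse of the symmetric positive definite square root of A,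
  i.e. S is symmetric positive definite and (S*S)*A = I.\<close>
definition is_inv_sqrt :: "real mat \<Rightarrow> real mat \<Rightarrow> bool" where
  "is_inv_sqrt S A \<longleftrightarrow> spd_mat (dim_row A) S \<and> S * S * A = 1\<^sub>m (dim_row A)"

definition mat_inv_sqrt :: "real mat \<Rightarrow> real mat" where
  "mat_inv_sqrt A = (THE S. is_inv_sqrt S A)"

text \<open>One differencing step for the vector v (length n) and reference index j:
  the (n-1) x n matrix whose rows, in increasing order of i \<noteq> j, are e_i^T if v_i = 0,
  and e_i^T / v_i - e_j^T / v_j otherwise.\<close>
definition diff_step :: "real vec \<Rightarrow> nat \<Rightarrow> real mat" where
  "diff_step v j = mat (dim_vec v - 1) (dim_vec v) (\<lambda>(r, c).
      let i = (if r < j then r else Suc r) in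
      if v $ i = 0 then (if c = i then 1 else 0)
      else (if c = i then 1 / v $ i else 0) - (if c = j then 1 / v $ j else 0))"

text \<open>diff_G js G k = the matrix [g_1^(k), ..., g_M^(k)]; column k (0-based) of it is g_(k+1)^(k).
  js (k+1) is the reference index j_(k+1) used at step k+1.\<close>
fun diff_G :: "(nat \<Rightarrow> nat) \<Rightarrow> real mat \<Rightarrow> nat \<Rightarrow> real mat" where
  "diff_G js G 0 = G"
| "diff_G js G (Suc k) = diff_step (col (diff_G js G k) k) (js (Suc k)) * diff_G js G k"

fun diff_Gamma :: "(nat \<Rightarrow> nat) \<Rightarrow> real mat \<Rightarrow> nat \<Rightarrow> real mat" where
  "diff_Gamma js G 0 = 1\<^sub>m (dim_row G)"
| "diff_Gamma js G (Suc k) = diff_step (col (diff_G js G k) k) (js (Suc k)) * diff_Gamma js G k"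

definition admissible_refs :: "(nat \<Rightarrow> nat) \<Rightarrow> real mat \<Rightarrow> bool" where
  "admissible_refs js G \<longleftrightarrow> (\<forall>k < dim_col G.
      let v = col (diff_G js G k) k in
        2 \<le> card {i. i < dim_vec v \<and> v $ i \<noteq> 0} \<and> js (Suc k) < dim_vec v \<and> v $ js (Suc k) \<noteq> 0)"

definition proj_perp :: "real mat \<Rightarrow> real mat" where
  "proj_perp G = 1\<^sub>m (dim_row G) - G * mat_inv (transpose_mat G * G) * transpose_mat G"

end

theory Submission
  imports Defs "Jordan_Normal_Form.Schur_Decomposition"
begin

text \<open>Each differencing step annihilates the current column g_k^(k-1) and has an explicit right
  inverse, so \<Gamma> has full row rank N - M and \<Gamma> G = 0. As G has full column rank, the row space
  of \<Gamma> is then exactly the orthogonal complement of the range of G; hence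
  P^T P = \<Gamma>^T (\<Gamma> \<Gamma>^T)^-1 \<Gamma> is the orthogonal projector P_G^perp, whatever the reference
  indices, and the differential estimate coincides with the joint least-squares estimate.
  The rank condition on [H G] also makes P H injective, so H^T P^T P H is invertible.
  The symmetric inverse square root of \<Gamma> \<Gamma>^T exists by the spectral theorem and is unique
  because the Sylvester equation T1 X + X T2 = 0 with positive definite T1, T2 forces X = 0.\<close>

lemma mult_mat_vec_zero_vec [simp]:
  "A \<in> carrier_mat nr n \<Longrightarrow> A *\<^sub>v 0\<^sub>v n = (0\<^sub>v nr :: 'a :: semiring_0 vec)"
  by (intro eq_vecI) auto

lemma zero_mat_mult_vec [simp]:
  "v \<in> carrier_vec n \<Longrightarrow> 0\<^sub>m nr n *\<^sub>v v = (0\<^sub>v nr :: 'a :: semiring_0 vec)"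
  by (intro eq_vecI) auto

section \<open>The spectral theorem for real symmetric matrices\<close>

lemma real_symmetric_mat_complex_eigenvalue_real:
  fixes A :: "real mat"
  assumes A: "A \<in> carrier_mat n n" and sym: "transpose_mat A = A"
    and v: "v \<in> carrier_vec n" "v \<noteq> 0\<^sub>v n" and Av: "map_mat complex_of_real A *\<^sub>v v = e \<cdot>\<^sub>v v"
  shows "e \<in> \<real>"
proof -
  define s where "s = (\<Sum>i\<in>{0..<n}. cnj (v$i) * (\<Sum>j\<in>{0..<n}. complex_of_real (A$$(i,j)) * v$j))"
  define r where "r = (\<Sum>i\<in>{0..<n}. cmod (v$i)^2)"
  have row: "(\<Sum>j\<in>{0..<n}. complex_of_real (A$$(i,j)) * v$j) = e * v$i" if i: "i < n" for i
    using arg_cong[OF Av, of "\<lambda>w. w $ i"] i A v by (simp add: scalar_prod_def)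
  have "s = (\<Sum>i\<in>{0..<n}. e * (cnj (v$i) * v$i))"
    unfolding s_def by (rule sum.cong) (simp_all add: row mult.left_commute)
  also have "\<dots> = e * (\<Sum>i\<in>{0..<n}. cnj (v$i) * v$i)" by (simp add: sum_distrib_left)
  also have "(\<Sum>i\<in>{0..<n}. cnj (v$i) * v$i) = complex_of_real r"
    unfolding r_def of_real_sum
    by (rule sum.cong) (simp_all only: of_real_power[symmetric] complex_norm_square mult.commute)
  finally have s: "s = e * complex_of_real r" .
  \<comment> \<open>s = v^* A v is real because A is real symmetric\<close>
  have "cnj s = (\<Sum>j\<in>{0..<n}. \<Sum>i\<in>{0..<n}. v$i * complex_of_real (A$$(i,j)) * cnj (v$j))"
    unfolding s_def by (subst sum.swap) (simp add: sum_distrib_left mult.assoc)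
  also have "\<dots> = s" unfolding s_def sum_distrib_left
  proof (intro sum.cong refl)
    fix j i assume "j \<in> {0..<n}" "i \<in> {0..<n}"
    then have "A $$ (i,j) = A $$ (j,i)"
      using arg_cong[OF sym, of "\<lambda>B. B $$ (j,i)"] A by simp
    then show "v$i * complex_of_real (A$$(i,j)) * cnj (v$j) = cnj (v$j) * (complex_of_real (A$$(j,i)) * v$i)"
      by (simp add: mult.commute mult.left_commute)
  qed
  finally have s_real: "cnj s = s" .
  obtain i where i: "i < n" and vi: "v $ i \<noteq> 0"
    using v by (metis carrier_vecD eq_vecI index_zero_vec)
  have "0 < cmod (v$i)^2" using vi by simp
  also have "\<dots> \<le> r" unfolding r_def by (rule member_le_sum) (use i in auto)
  finally have "r \<noteq> 0" by simp
  then have "cnj e = e" using s s_real by (metis complex_cnj_complex_of_real complex_cnj_mult mult_right_cancel of_real_eq_0_iff)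
  then show ?thesis by (simp add: Reals_cnj_iff)
qed

lemma real_symmetric_mat_unit_eigenvector:
  fixes A :: "real mat"
  assumes A: "A \<in> carrier_mat n n" and sym: "transpose_mat A = A" and n: "n > 0"
  shows "\<exists>lam v. v \<in> carrier_vec n \<and> v \<bullet> v = 1 \<and> A *\<^sub>v v = lam \<cdot>\<^sub>v v"
proof -
  let ?Ac = "map_mat complex_of_real A"
  have Ac: "?Ac \<in> carrier_mat n n" using A by simp
  obtain es where cp: "char_poly ?Ac = (\<Prod>a\<leftarrow>es. [:- a, 1:])" and "length es = n"
    using char_poly_factorized[OF Ac] by blast
  with n obtain e es' where "es = e # es'" by (cases es) auto
  then have root: "poly (char_poly ?Ac) e = 0" unfolding cp by simp
  then obtain w where "eigenvector ?Ac w e"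
    using eigenvalue_root_char_poly[OF Ac] unfolding eigenvalue_def by blast
  then have "w \<in> carrier_vec n" "w \<noteq> 0\<^sub>v n" "?Ac *\<^sub>v w = e \<cdot>\<^sub>v w"
    using Ac unfolding eigenvector_def by auto
  then obtain lam where e: "e = complex_of_real lam"
    using real_symmetric_mat_complex_eigenvalue_real[OF A sym] by (metis Reals_cases)
  have "complex_of_real (poly (char_poly A) lam) = 0"
    using root unfolding of_real_hom.char_poly_hom[OF A] e by simp
  then have "eigenvalue A lam" using eigenvalue_root_char_poly[OF A] by simp
  then obtain v0 where v0: "v0 \<in> carrier_vec n" "v0 \<noteq> 0\<^sub>v n" and Av0: "A *\<^sub>v v0 = lam \<cdot>\<^sub>v v0"
    using A unfolding eigenvalue_def eigenvector_def by blast
  have pos: "v0 \<bullet> v0 > 0"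
    using conjugate_square_greater_0_vec[OF v0(1)] v0(2) by simp
  define v where "v = (1 / sqrt (v0 \<bullet> v0)) \<cdot>\<^sub>v v0"
  have "v \<in> carrier_vec n" "v \<bullet> v = 1" unfolding v_def using v0 pos by simp_all
  moreover have "A *\<^sub>v v = lam \<cdot>\<^sub>v v" unfolding v_def using Av0 v0 A
    by (simp add: mult_mat_vec smult_smult_assoc mult.commute)
  ultimately show ?thesis by blast
qed

lemma orthonormal_mat_with_first_col:
  fixes v :: "real vec"
  assumes v: "v \<in> carrier_vec n" and vv: "v \<bullet> v = 1"
  shows "\<exists>W. W \<in> carrier_mat n n \<and> transpose_mat W * W = 1\<^sub>m n \<and> col W 0 = v"
proof -
  interpret cof_vec_space n "TYPE(real)" .
  have v0: "v \<noteq> 0\<^sub>v n" using vv v by auto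
  define b where "b = basis_completion v"
  from basis_completion[OF v v0, folded b_def]
  have dist_b: "distinct b" and indep: "\<not> lin_dep (set b)" and b: "set b \<subseteq> carrier_vec n"
    and hd_b: "hd b = v" and len_b: "length b = n" by auto
  have n: "n > 0" using v0 v by (cases n) auto
  from hd_b len_b n obtain vs where bv: "b = v # vs" by (cases b) auto
  define ws where "ws = gram_schmidt n b"
  from gram_schmidt_result[OF b dist_b indep ws_def]
  have ws: "set ws \<subseteq> carrier_vec n" "corthogonal ws" "length ws = n" by (auto simp: len_b)
  have ws0: "ws ! 0 = v"
    using gram_schmidt_hd[OF v, of vs, folded bv ws_def] ws(3) n by (cases ws) auto
  have wsi: "ws ! i \<in> carrier_vec n" if "i < n" for i using ws that by auto
  have orth: "ws ! i \<bullet> ws ! j = 0 \<longleftrightarrow> i \<noteq> j" if "i < n" "j < n" for i j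
    using corthogonalD[OF ws(2), of i j] ws that by simp
  have pos: "ws ! i \<bullet> ws ! i > 0" if "i < n" for i
    using orth[OF that that] conjugate_square_ge_0_vec[of "ws ! i"] by simp
  define us where "us = map (\<lambda>w. (1 / sqrt (w \<bullet> w)) \<cdot>\<^sub>v w) ws"
  have usi: "us ! i = (1 / sqrt (ws ! i \<bullet> ws ! i)) \<cdot>\<^sub>v ws ! i" if "i < n" for i
    unfolding us_def using that ws by simp
  have us: "set us \<subseteq> carrier_vec n" "length us = n" unfolding us_def using ws by auto
  define W where "W = mat_of_cols n us"
  have W: "W \<in> carrier_mat n n" unfolding W_def using us by auto
  have colW: "col W i = us ! i" if "i < n" for i
    unfolding W_def using that us by (simp add: subsetD)
  have "transpose_mat W * W = 1\<^sub>m n"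
  proof (rule eq_matI)
    fix i j assume "i < dim_row (1\<^sub>m n :: real mat)" "j < dim_col (1\<^sub>m n :: real mat)"
    then have i: "i < n" and j: "j < n" by auto
    have "(transpose_mat W * W) $$ (i,j) = us ! i \<bullet> us ! j" using W i j colW by simp
    also have "\<dots> = (1 / sqrt (ws ! i \<bullet> ws ! i)) * (1 / sqrt (ws ! j \<bullet> ws ! j)) * (ws ! i \<bullet> ws ! j)"
      unfolding usi[OF i] usi[OF j] using wsi[OF i] wsi[OF j] by simp
    also have "\<dots> = 1\<^sub>m n $$ (i,j)"
      using orth[OF i j] pos[OF i] i j by (cases "i = j") (simp_all add: field_simps)
    finally show "(transpose_mat W * W) $$ (i,j) = 1\<^sub>m n $$ (i,j)" .
  qed (use W in auto)
  moreover have "col W 0 = v" using colW[OF n] usi[OF n] ws0 vv by simp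
  ultimately show ?thesis using W by blast
qed

lemma symmetric_mat_eigen_first_col_block:
  fixes A :: "real mat"
  assumes A: "A \<in> carrier_mat (Suc m) (Suc m)" and sym: "transpose_mat A = A"
    and col0: "col A 0 = lam \<cdot>\<^sub>v unit_vec (Suc m) 0"
  shows "\<exists>A3. A3 \<in> carrier_mat m m \<and> transpose_mat A3 = A3 \<and>
    A = four_block_mat (mat 1 1 (\<lambda>_. lam)) (0\<^sub>m 1 m) (0\<^sub>m m 1) A3"
proof -
  have Ai0: "A $$ (i,0) = (if i = 0 then lam else 0)" if "i < Suc m" for i
    using arg_cong[OF col0, of "\<lambda>x. x $ i"] that A by (auto simp: unit_vec_def)
  have A0j: "A $$ (0,j) = (if j = 0 then lam else 0)" if "j < Suc m" for j
    using arg_cong[OF sym, of "\<lambda>B. B $$ (j,0)"] Ai0[OF that] that A by auto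
  define A3 where "A3 = mat m m (\<lambda>(i,j). A $$ (Suc i, Suc j))"
  have "transpose_mat A3 = A3"
  proof (rule eq_matI)
    fix i j assume "i < dim_row A3" "j < dim_col A3"
    then show "transpose_mat A3 $$ (i, j) = A3 $$ (i, j)"
      using arg_cong[OF sym, of "\<lambda>B. B $$ (Suc i, Suc j)"] A by (simp add: A3_def)
  qed (simp_all add: A3_def)
  moreover have "A = four_block_mat (mat 1 1 (\<lambda>_. lam)) (0\<^sub>m 1 m) (0\<^sub>m m 1) A3"
  proof (rule eq_matI)
    fix i j assume "i < dim_row (four_block_mat (mat 1 1 (\<lambda>_. lam)) (0\<^sub>m 1 m) (0\<^sub>m m 1) A3)"
      "j < dim_col (four_block_mat (mat 1 1 (\<lambda>_. lam)) (0\<^sub>m 1 m) (0\<^sub>m m 1) A3)"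
    then have i: "i < Suc m" and j: "j < Suc m" by (simp_all add: A3_def)
    show "A $$ (i, j) = four_block_mat (mat 1 1 (\<lambda>_. lam)) (0\<^sub>m 1 m) (0\<^sub>m m 1) A3 $$ (i, j)"
    proof (cases "i = 0 \<or> j = 0")
      case True
      then show ?thesis using Ai0[OF i] A0j[OF j] i j by (auto simp: A3_def)
    next
      case False
      then obtain i' j' where "i = Suc i'" "j = Suc j'" by (cases i; cases j) auto
      then show ?thesis using i j unfolding A3_def by auto
    qed
  qed (use A in \<open>auto simp: A3_def\<close>)
  moreover have "A3 \<in> carrier_mat m m" unfolding A3_def by simp
  ultimately show ?thesis by blast
qed

lemma symmetric_mat_orthogonal_deflation:
  fixes A W :: "real mat"
  assumes A: "A \<in> carrier_mat (Suc m) (Suc m)" and sym: "transpose_mat A = A"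
    and W: "W \<in> carrier_mat (Suc m) (Suc m)" and WW: "transpose_mat W * W = 1\<^sub>m (Suc m)"
    and Av: "A *\<^sub>v col W 0 = lam \<cdot>\<^sub>v col W 0"
  shows "\<exists>A3. A3 \<in> carrier_mat m m \<and> transpose_mat A3 = A3 \<and>
    transpose_mat W * A * W = four_block_mat (mat 1 1 (\<lambda>_. lam)) (0\<^sub>m 1 m) (0\<^sub>m m 1) A3"
proof (rule symmetric_mat_eigen_first_col_block)
  let ?n = "Suc m"
  have WT: "transpose_mat W \<in> carrier_mat ?n ?n" using W by simp
  show "transpose_mat W * A * W \<in> carrier_mat ?n ?n" using W A by simp
  show "transpose_mat (transpose_mat W * A * W) = transpose_mat W * A * W"
    using W A sym by (simp add: transpose_mult[of _ ?n ?n _ ?n] assoc_mult_mat[of _ ?n ?n _ ?n _ ?n])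
  have "col (transpose_mat W * A * W) 0 = transpose_mat W *\<^sub>v (A *\<^sub>v col W 0)"
    using W A col_mult2[of "transpose_mat W" ?n ?n "A * W" ?n 0] col_mult2[of A ?n ?n W ?n 0]
    by (simp add: assoc_mult_mat[of _ ?n ?n _ ?n _ ?n])
  also have "\<dots> = lam \<cdot>\<^sub>v (transpose_mat W *\<^sub>v col W 0)"
    unfolding Av by (rule mult_mat_vec[OF WT col_carrier_vec[OF _ W]]) simp
  also have "transpose_mat W *\<^sub>v col W 0 = col (transpose_mat W * W) 0"
    by (rule col_mult2[OF WT W, symmetric]) simp
  finally show "col (transpose_mat W * A * W) 0 = lam \<cdot>\<^sub>v unit_vec ?n 0" unfolding WW by simp
qed

lemma orthogonal_mat_one_block_conj_mat_diag:
  fixes U :: "real mat"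
  assumes U: "U \<in> carrier_mat m m" and UU: "transpose_mat U * U = 1\<^sub>m m"
  defines "B \<equiv> four_block_mat (1\<^sub>m 1) (0\<^sub>m 1 m) (0\<^sub>m m 1) U"
  shows "B \<in> carrier_mat (Suc m) (Suc m) \<and> transpose_mat B * B = 1\<^sub>m (Suc m) \<and>
    B * mat_diag (Suc m) (\<lambda>i. if i = 0 then lam else d (i - 1)) * transpose_mat B
      = four_block_mat (mat 1 1 (\<lambda>_. lam)) (0\<^sub>m 1 m) (0\<^sub>m m 1) (U * mat_diag m d * transpose_mat U)"
proof -
  define D where "D = mat_diag m d"
  have D: "D \<in> carrier_mat m m" unfolding D_def by simp
  have BT: "transpose_mat B = four_block_mat (1\<^sub>m 1) (0\<^sub>m 1 m) (0\<^sub>m m 1) (transpose_mat U)"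
    unfolding B_def using U by (subst transpose_four_block_mat) auto
  have "mat_diag (Suc m) (\<lambda>i. if i = 0 then lam else d (i - 1))
      = four_block_mat (mat 1 1 (\<lambda>_. lam)) (0\<^sub>m 1 m) (0\<^sub>m m 1) D"
    by (intro eq_matI) (auto simp: D_def mat_diag_def)
  moreover have "B * four_block_mat (mat 1 1 (\<lambda>_. lam)) (0\<^sub>m 1 m) (0\<^sub>m m 1) D * transpose_mat B
      = four_block_mat (mat 1 1 (\<lambda>_. lam)) (0\<^sub>m 1 m) (0\<^sub>m m 1) (U * D * transpose_mat U)"
    unfolding BT unfolding B_def using U D
    by (subst mult_four_block_mat[of _ 1 1 _ m _ m _ _ 1 _ m], auto,
        subst mult_four_block_mat[of _ 1 1 _ m _ m _ _ 1 _ m], auto)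
  moreover have "transpose_mat B * B = 1\<^sub>m (Suc m)"
    unfolding BT unfolding B_def using U
    by (subst mult_four_block_mat[of _ 1 1 _ m _ m _ _ 1 _ m]) (auto simp: UU)
  moreover have "B \<in> carrier_mat (Suc m) (Suc m)" unfolding B_def using U by auto
  ultimately show ?thesis unfolding D_def by simp
qed

theorem real_symmetric_mat_orthogonal_diagonalization:
  fixes A :: "real mat"
  assumes "A \<in> carrier_mat n n" and "transpose_mat A = A"
  shows "\<exists>U d. U \<in> carrier_mat n n \<and> transpose_mat U * U = 1\<^sub>m n \<and>
    A = U * mat_diag n d * transpose_mat U"
  using assms
proof (induction n arbitrary: A)
  case 0
  then show ?case by (intro exI[of _ "1\<^sub>m 0"] exI[of _ "\<lambda>_. 0"] conjI eq_matI) auto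
next
  case (Suc m A)
  let ?n = "Suc m"
  have A: "A \<in> carrier_mat ?n ?n" using Suc.prems by simp
  obtain lam v where v: "v \<in> carrier_vec ?n" "v \<bullet> v = 1" and Av: "A *\<^sub>v v = lam \<cdot>\<^sub>v v"
    using real_symmetric_mat_unit_eigenvector[OF Suc.prems] by blast
  obtain W where W: "W \<in> carrier_mat ?n ?n" and WW: "transpose_mat W * W = 1\<^sub>m ?n"
    and "col W 0 = v"
    using orthonormal_mat_with_first_col[OF v] by blast
  then obtain A3 where A3: "A3 \<in> carrier_mat m m" "transpose_mat A3 = A3" and
    A': "transpose_mat W * A * W = four_block_mat (mat 1 1 (\<lambda>_. lam)) (0\<^sub>m 1 m) (0\<^sub>m m 1) A3"
    using symmetric_mat_orthogonal_deflation[OF Suc.prems W WW] Av by blast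
  obtain U3 d3 where U3: "U3 \<in> carrier_mat m m" "transpose_mat U3 * U3 = 1\<^sub>m m"
    and A3_eq: "A3 = U3 * mat_diag m d3 * transpose_mat U3"
    using Suc.IH[OF A3] by blast
  define d where "d i = (if i = 0 then lam else d3 (i - 1))" for i
  obtain B where B: "B \<in> carrier_mat ?n ?n" and BB: "transpose_mat B * B = 1\<^sub>m ?n"
    and BDB: "B * mat_diag ?n d * transpose_mat B = transpose_mat W * A * W"
    using orthogonal_mat_one_block_conj_mat_diag[OF U3, of lam d3] unfolding A' A3_eq d_def by blast
  have WT: "transpose_mat W \<in> carrier_mat ?n ?n" using W by simp
  have WW': "W * transpose_mat W = 1\<^sub>m ?n" using mat_mult_left_right_inverse[OF WT W WW] .
  define U where "U = W * B"
  have "transpose_mat U * U = transpose_mat B * (transpose_mat W * W) * B"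
    unfolding U_def using W B by (simp add: transpose_mult assoc_mult_mat[of _ ?n ?n _ ?n _ ?n])
  then have "transpose_mat U * U = 1\<^sub>m ?n" using WW BB B by simp
  moreover have "A = W * (transpose_mat W * A * W) * transpose_mat W"
    using W A WT by (simp add: assoc_mult_mat[of _ ?n ?n _ ?n _ ?n] WW'
        flip: assoc_mult_mat[of W ?n ?n "transpose_mat W" ?n _ ?n])
  then have "A = U * mat_diag ?n d * transpose_mat U"
    unfolding BDB[symmetric] U_def using W B mat_diag_dim[of ?n d]
    by (simp add: transpose_mult[OF W B] assoc_mult_mat[of _ ?n ?n _ ?n _ ?n])
  moreover have "U \<in> carrier_mat ?n ?n" unfolding U_def using W B by simp
  ultimately show ?case by blast
qed

section \<open>Positive definite matrices and their inverse square roots\<close>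

lemma spd_mat_carrier: "spd_mat n T \<Longrightarrow> T \<in> carrier_mat n n"
  unfolding spd_mat_def by simp

lemma spd_mat_quadratic_form_nonneg:
  assumes T: "spd_mat n T" and x: "x \<in> carrier_vec n"
  shows "0 \<le> x \<bullet> (T *\<^sub>v x)"
proof (cases "x = 0\<^sub>v n")
  case True
  then show ?thesis using spd_mat_carrier[OF T] by simp
next
  case False
  then show ?thesis using T x unfolding spd_mat_def by force
qed

lemma spd_mat_cols_eq_zero:
  fixes X :: "real mat"
  assumes T: "spd_mat n T" and X: "X \<in> carrier_mat n m"
    and le: "(\<Sum>k\<in>{0..<m}. col X k \<bullet> (T *\<^sub>v col X k)) \<le> 0"
  shows "X = 0\<^sub>m n m"
proof (rule eq_matI)
  fix i k assume "i < dim_row (0\<^sub>m n m :: real mat)" "k < dim_col (0\<^sub>m n m :: real mat)"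
  then have i: "i < n" and k: "k < m" by auto
  have nonneg: "0 \<le> col X l \<bullet> (T *\<^sub>v col X l)" if "l < m" for l
    using spd_mat_quadratic_form_nonneg[OF T] col_carrier_vec[OF that X] .
  have "col X k \<bullet> (T *\<^sub>v col X k) \<le> (\<Sum>l\<in>{0..<m}. col X l \<bullet> (T *\<^sub>v col X l))"
    by (rule member_le_sum) (use k nonneg in auto)
  then have "\<not> 0 < col X k \<bullet> (T *\<^sub>v col X k)" using le by linarith
  then have "col X k = 0\<^sub>v n"
    using T col_carrier_vec[OF k X] unfolding spd_mat_def by blast
  then have "col X k $ i = 0" using i by simp
  then show "X $$ (i, k) = 0\<^sub>m n m $$ (i, k)" using i k X by simp
qed (use X in auto)

lemma spd_mat_sylvester_eq_zero:
  fixes T1 T2 X :: "real mat"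
  assumes T1: "spd_mat n T1" and T2: "spd_mat n T2" and X: "X \<in> carrier_mat n n"
    and eq: "T1 * X + X * T2 = 0\<^sub>m n n"
  shows "X = 0\<^sub>m n n"
proof -
  have T1c: "T1 \<in> carrier_mat n n" and T2c: "T2 \<in> carrier_mat n n" and sym2: "transpose_mat T2 = T2"
    using T1 T2 unfolding spd_mat_def by auto
  \<comment> \<open>the Frobenius product of X with T1 X + X T2 is a sum of two nonnegative quadratic forms\<close>
  define F1 where "F1 = (\<Sum>k\<in>{0..<n}. col X k \<bullet> (T1 *\<^sub>v col X k))"
  define F2 where "F2 = (\<Sum>i\<in>{0..<n}. row X i \<bullet> (T2 *\<^sub>v row X i))"
  have F1: "F1 = (\<Sum>k\<in>{0..<n}. \<Sum>i\<in>{0..<n}. X $$ (i,k) * (T1 * X) $$ (i,k))"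
    unfolding F1_def using X T1c by (intro sum.cong) (auto simp: scalar_prod_def)
  have row_T2: "row T2 k \<bullet> row X i = (X * T2) $$ (i,k)" if "i < n" "k < n" for i k
    using arg_cong[OF sym2, of "\<lambda>B. col B k"] that X T2c by (simp add: comm_scalar_prod[of _ n])
  have "row X i \<bullet> (T2 *\<^sub>v row X i) = (\<Sum>k\<in>{0..<n}. X $$ (i,k) * (X * T2) $$ (i,k))"
    if "i < n" for i
    using that X T2c by (auto simp: scalar_prod_def[of "row X i"] row_T2 intro: sum.cong)
  then have F2: "F2 = (\<Sum>k\<in>{0..<n}. \<Sum>i\<in>{0..<n}. X $$ (i,k) * (X * T2) $$ (i,k))"
    unfolding F2_def by (subst sum.swap) (simp add: atLeast0LessThan)
  have "F1 + F2 = (\<Sum>k\<in>{0..<n}. \<Sum>i\<in>{0..<n}. X $$ (i,k) * (T1 * X + X * T2) $$ (i,k))"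
    unfolding F1 F2 sum.distrib[symmetric] using X T1c T2c by (intro sum.cong) (auto simp: distrib_left)
  also have "\<dots> = 0" unfolding eq by simp
  finally have "F1 + F2 = 0" .
  moreover have "0 \<le> F2" unfolding F2_def
    by (intro sum_nonneg spd_mat_quadratic_form_nonneg[OF T2]) (use X in auto)
  ultimately have "F1 \<le> 0" by linarith
  then show ?thesis using spd_mat_cols_eq_zero[OF T1 X] unfolding F1_def by blast
qed

lemma spd_mat_square_inj:
  fixes T1 T2 :: "real mat"
  assumes T1: "spd_mat n T1" and T2: "spd_mat n T2" and eq: "T1 * T1 = T2 * T2"
  shows "T1 = T2"
proof -
  have T1c: "T1 \<in> carrier_mat n n" and T2c: "T2 \<in> carrier_mat n n"
    using T1 T2 by (simp_all add: spd_mat_carrier)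
  have "T1 * (T1 - T2) + (T1 - T2) * T2 = T1 * T1 - T2 * T2"
    using T1c T2c by (simp add: mult_minus_distrib_mat minus_mult_distrib_mat)
      (intro eq_matI, auto)
  then have "T1 * (T1 - T2) + (T1 - T2) * T2 = 0\<^sub>m n n"
    unfolding eq using T2c by simp
  then have diff: "T1 - T2 = 0\<^sub>m n n"
    by (rule spd_mat_sylvester_eq_zero[OF T1 T2 minus_carrier_mat[OF T2c]])
  show ?thesis
  proof (rule eq_matI)
    fix i j assume "i < dim_row T2" "j < dim_col T2"
    then show "T1 $$ (i, j) = T2 $$ (i, j)"
      using arg_cong[OF diff, of "\<lambda>B. B $$ (i, j)"] T1c T2c by simp
  qed (use T1c T2c in auto)
qed

lemma transpose_mat_diag [simp]: "transpose_mat (mat_diag n f) = mat_diag n f"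
  by (intro eq_matI) (auto simp: mat_diag_def)

lemma mat_diag_cong: "(\<And>i. i < n \<Longrightarrow> f i = g i) \<Longrightarrow> mat_diag n f = mat_diag n g"
  by (intro eq_matI) (auto simp: mat_diag_def)

lemma mat_diag_quadratic_form:
  fixes y :: "real vec"
  assumes "y \<in> carrier_vec n"
  shows "y \<bullet> (mat_diag n f *\<^sub>v y) = (\<Sum>i\<in>{0..<n}. f i * (y $ i)^2)"
proof -
  have "(mat_diag n f *\<^sub>v y) $ i = f i * y $ i" if "i < n" for i
    using that assms by (simp add: mat_diag_def scalar_prod_def if_distrib[of "\<lambda>a. a * _"] cong: if_cong)
  then have "y $ i * (mat_diag n f *\<^sub>v y) $ i = f i * (y $ i)^2" if "i < n" for i
    using that by (simp add: power2_eq_square mult.left_commute)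
  then show ?thesis unfolding scalar_prod_def by (intro sum.cong) (auto simp: mat_diag_def)
qed

lemma quadratic_form_orthogonal_conj:
  fixes U D :: "real mat"
  assumes U: "U \<in> carrier_mat n n" and D: "D \<in> carrier_mat n n" and x: "x \<in> carrier_vec n"
  shows "x \<bullet> ((U * D * transpose_mat U) *\<^sub>v x)
    = (transpose_mat U *\<^sub>v x) \<bullet> (D *\<^sub>v (transpose_mat U *\<^sub>v x))"
proof -
  have "(U * D * transpose_mat U) *\<^sub>v x = (U * D) *\<^sub>v (transpose_mat U *\<^sub>v x)"
    by (rule assoc_mult_mat_vec) (use U D x in auto)
  also have "\<dots> = U *\<^sub>v (D *\<^sub>v (transpose_mat U *\<^sub>v x))"
    by (rule assoc_mult_mat_vec) (use U D x in auto)
  finally have "(U * D * transpose_mat U) *\<^sub>v x = U *\<^sub>v (D *\<^sub>v (transpose_mat U *\<^sub>v x))" .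
  then show ?thesis using transpose_vec_mult_scalar[OF U, of _ x] U D x by simp
qed

lemma orthogonal_conj_mat_diag_spd:
  fixes U :: "real mat"
  assumes U: "U \<in> carrier_mat n n" and UU: "transpose_mat U * U = 1\<^sub>m n"
    and d: "\<And>i. i < n \<Longrightarrow> d i > 0"
  shows "spd_mat n (U * mat_diag n d * transpose_mat U)"
  unfolding spd_mat_def
proof (intro conjI ballI impI)
  show "U * mat_diag n d * transpose_mat U \<in> carrier_mat n n"
    using U by (meson mat_diag_dim mult_carrier_mat transpose_carrier_mat)
  have "transpose_mat (U * mat_diag n d * transpose_mat U) = U * transpose_mat (U * mat_diag n d)"
    using U by (subst transpose_mult[of _ n n _ n]) auto
  also have "\<dots> = U * mat_diag n d * transpose_mat U"
    using U by (subst transpose_mult[of _ n n _ n]) (auto simp: assoc_mult_mat[of _ n n _ n _ n])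
  finally show "transpose_mat (U * mat_diag n d * transpose_mat U) = U * mat_diag n d * transpose_mat U" .
  fix x :: "real vec" assume x: "x \<in> carrier_vec n" and x0: "x \<noteq> 0\<^sub>v n"
  define y where "y = transpose_mat U *\<^sub>v x"
  have UT: "transpose_mat U \<in> carrier_mat n n" using U by simp
  have y: "y \<in> carrier_vec n" unfolding y_def using U x by simp
  have "U *\<^sub>v y = x"
    unfolding y_def using U x mat_mult_left_right_inverse[OF UT U UU]
    by (simp flip: assoc_mult_mat_vec[OF U UT x])
  then have "y \<noteq> 0\<^sub>v n" using x0 U by auto
  then obtain i where i: "i < n" and yi: "y $ i \<noteq> 0"
    using y by (metis carrier_vecD eq_vecI index_zero_vec)
  have "0 < d i * (y $ i)^2" using d[OF i] yi by simp
  also have "\<dots> \<le> (\<Sum>k\<in>{0..<n}. d k * (y $ k)^2)"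
    by (rule member_le_sum) (use i in \<open>auto intro!: mult_nonneg_nonneg less_imp_le[OF d]\<close>)
  also have "\<dots> = x \<bullet> ((U * mat_diag n d * transpose_mat U) *\<^sub>v x)"
    unfolding quadratic_form_orthogonal_conj[OF U mat_diag_dim x] y_def[symmetric]
    by (rule mat_diag_quadratic_form[OF y, symmetric])
  finally show "0 < x \<bullet> ((U * mat_diag n d * transpose_mat U) *\<^sub>v x)" .
qed

lemma spd_mat_orthogonal_diag_pos:
  fixes U :: "real mat"
  assumes spd: "spd_mat n (U * mat_diag n d * transpose_mat U)"
    and U: "U \<in> carrier_mat n n" and UU: "transpose_mat U * U = 1\<^sub>m n" and i: "i < n"
  shows "d i > 0"
proof -
  have UT: "transpose_mat U \<in> carrier_mat n n" using U by simp
  have x: "col U i \<in> carrier_vec n" using U i by simp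
  have Ux: "transpose_mat U *\<^sub>v col U i = unit_vec n i"
    using col_mult2[OF UT U i] UU i by simp
  have "col U i \<noteq> 0\<^sub>v n"
  proof
    assume "col U i = 0\<^sub>v n"
    then have "unit_vec n i $ i = (0\<^sub>v n :: real vec) $ i" using Ux UT by simp
    then show False using i by simp
  qed
  then have "0 < col U i \<bullet> ((U * mat_diag n d * transpose_mat U) *\<^sub>v col U i)"
    using spd x unfolding spd_mat_def by blast
  also have "\<dots> = (\<Sum>k\<in>{0..<n}. d k * (unit_vec n i $ k)^2)"
    unfolding quadratic_form_orthogonal_conj[OF U mat_diag_dim x] Ux
    by (rule mat_diag_quadratic_form) simp
  also have "\<dots> = d i" using i by (subst sum.remove[of _ i]) (auto simp: unit_vec_def)
  finally show ?thesis .
qed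

lemma spd_mat_inv_sqrt_exists:
  fixes A :: "real mat"
  assumes A: "spd_mat n A"
  shows "\<exists>S. is_inv_sqrt S A"
proof -
  have Ac: "A \<in> carrier_mat n n" and dim: "dim_row A = n" using spd_mat_carrier[OF A] by auto
  obtain U d where U: "U \<in> carrier_mat n n" and UU: "transpose_mat U * U = 1\<^sub>m n"
    and A_eq: "A = U * mat_diag n d * transpose_mat U"
    using real_symmetric_mat_orthogonal_diagonalization[OF Ac] A unfolding spd_mat_def by blast
  have d: "d i > 0" if "i < n" for i
    using spd_mat_orthogonal_diag_pos[OF A[unfolded A_eq] U UU that] .
  have UT: "transpose_mat U \<in> carrier_mat n n" using U by simp
  have UU': "U * transpose_mat U = 1\<^sub>m n" using mat_mult_left_right_inverse[OF UT U UU] .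
  define E where "E = mat_diag n (\<lambda>i. 1 / sqrt (d i))"
  define S where "S = U * E * transpose_mat U"
  have E: "E \<in> carrier_mat n n" unfolding E_def by simp
  have "spd_mat n S" unfolding S_def E_def by (rule orthogonal_conj_mat_diag_spd[OF U UU]) (use d in simp)
  moreover have "S * S * A = 1\<^sub>m n"
  proof -
    have cancel: "transpose_mat U * (U * Z) = Z" if "Z \<in> carrier_mat n k" for Z k
      using that U UT by (simp flip: assoc_mult_mat[OF UT U that] add: UU)
    define D where "D = mat_diag n d"
    have D: "D \<in> carrier_mat n n" unfolding D_def by simp
    have "S * S * A = U * (E * (E * (D * transpose_mat U)))"
      unfolding S_def A_eq D_def[symmetric] using U E D
      by (simp add: assoc_mult_mat[of _ n n _ n _ n] cancel[of _ n])
    also have "\<dots> = U * ((E * E * D) * transpose_mat U)"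
      using U E D by (simp add: assoc_mult_mat[of _ n n _ n _ n])
    also have "E * E * D = 1\<^sub>m n"
      unfolding E_def D_def mat_diag_diag mat_diag_one[symmetric] using d
      by (intro mat_diag_cong) (simp add: less_imp_le less_imp_neq[symmetric])
    finally show ?thesis using UT UU' by simp
  qed
  ultimately show ?thesis unfolding is_inv_sqrt_def dim by blast
qed

lemma is_inv_sqrt_unique:
  fixes A :: "real mat"
  assumes A: "A \<in> carrier_mat n n" and S1: "is_inv_sqrt S1 A" and S2: "is_inv_sqrt S2 A"
  shows "S1 = S2"
proof -
  have dim: "dim_row A = n" using A by simp
  have s1: "spd_mat n S1" "S1 * S1 * A = 1\<^sub>m n" and s2: "spd_mat n S2" "S2 * S2 * A = 1\<^sub>m n"
    using S1 S2 unfolding is_inv_sqrt_def dim by auto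
  have c1: "S1 * S1 \<in> carrier_mat n n" and c2: "S2 * S2 \<in> carrier_mat n n"
    using spd_mat_carrier[OF s1(1)] spd_mat_carrier[OF s2(1)] by simp_all
  have "A * (S2 * S2) = 1\<^sub>m n" using mat_mult_left_right_inverse[OF c2 A s2(2)] .
  then have "S1 * S1 = (S1 * S1 * A) * (S2 * S2)"
    using c1 c2 A by (simp add: assoc_mult_mat[of _ n n _ n _ n] right_mult_one_mat[OF c1])
  then have "S1 * S1 = S2 * S2" unfolding s1(2) using left_mult_one_mat[OF c2] by simp
  then show ?thesis using spd_mat_square_inj s1(1) s2(1) by blast
qed

lemma spd_mat_inv_sqrt_ex1:
  fixes A :: "real mat"
  assumes "spd_mat n A"
  shows "\<exists>!S. is_inv_sqrt S A"
  using spd_mat_inv_sqrt_exists[OF assms] is_inv_sqrt_unique[OF spd_mat_carrier[OF assms]] by blast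

section \<open>Inverses, Gram matrices and rank\<close>

lemma mult_vec_eq_zero_if_left_inverse:
  fixes A B :: "real mat"
  assumes A: "A \<in> carrier_mat n m" and B: "B \<in> carrier_mat m n" and BA: "B * A = 1\<^sub>m m"
    and v: "v \<in> carrier_vec m" and Av: "A *\<^sub>v v = 0\<^sub>v n"
  shows "v = 0\<^sub>v m"
proof -
  have "v = (B * A) *\<^sub>v v" unfolding BA using v by simp
  also have "\<dots> = B *\<^sub>v (A *\<^sub>v v)" by (rule assoc_mult_mat_vec[OF B A v])
  finally show ?thesis unfolding Av using B by simp
qed

lemma mat_eq_one_if_mult_vec_id:
  fixes E :: "real mat"
  assumes E: "E \<in> carrier_mat n n" and id: "\<And>v. v \<in> carrier_vec n \<Longrightarrow> E *\<^sub>v v = v"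
  shows "E = 1\<^sub>m n"
proof (rule eq_matI)
  fix i j assume "i < dim_row (1\<^sub>m n :: real mat)" "j < dim_col (1\<^sub>m n :: real mat)"
  then have i: "i < n" and j: "j < n" by auto
  have "E $$ (i, j) = (E *\<^sub>v unit_vec n j) $ i" using E i j by simp
  then show "E $$ (i, j) = 1\<^sub>m n $$ (i, j)" using id[of "unit_vec n j"] i j by simp
qed (use E in auto)

lemma mat_inv_eqI:
  fixes A B :: "real mat"
  assumes A: "A \<in> carrier_mat n n" and B: "B \<in> carrier_mat n n"
    and AB: "A * B = 1\<^sub>m n" and BA: "B * A = 1\<^sub>m n"
  shows "mat_inv A = B"
  unfolding mat_inv_def
proof (rule the_equality)
  fix B' assume "B' \<in> carrier_mat (dim_row A) (dim_row A) \<and> A * B' = 1\<^sub>m (dim_row A) \<and>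
    B' * A = 1\<^sub>m (dim_row A)"
  then have B': "B' \<in> carrier_mat n n" and B'A: "B' * A = 1\<^sub>m n" using A by auto
  have "B' = (B' * A) * B" using AB B' A B by (simp add: assoc_mult_mat[of _ n n _ n _ n])
  then show "B' = B" using B'A B by simp
qed (use A B AB BA in auto)

lemma mat_inv_if_trivial_kernel:
  fixes A :: "real mat"
  assumes A: "A \<in> carrier_mat n n"
    and ker: "\<And>v. v \<in> carrier_vec n \<Longrightarrow> A *\<^sub>v v = 0\<^sub>v n \<Longrightarrow> v = 0\<^sub>v n"
  shows "invertible_mat A \<and> mat_inv A \<in> carrier_mat n n \<and>
    A * mat_inv A = 1\<^sub>m n \<and> mat_inv A * A = 1\<^sub>m n"
proof -
  have "det A \<noteq> 0" using det_0_iff_vec_prod_zero[OF A] ker by blast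
  then obtain B where B: "B \<in> carrier_mat n n" and AB: "A * B = 1\<^sub>m n" and BA: "B * A = 1\<^sub>m n"
    using det_non_zero_imp_unit[OF A, of undefined] unfolding Units_def ring_mat_def by auto
  then have "invertible_mat A"
    unfolding invertible_mat_def inverts_mat_def using A by auto
  then show ?thesis using mat_inv_eqI[OF A B AB BA] B AB BA by simp
qed

lemma spd_mat_inverse:
  fixes A :: "real mat"
  assumes "spd_mat n A"
  shows "invertible_mat A \<and> mat_inv A \<in> carrier_mat n n \<and>
    A * mat_inv A = 1\<^sub>m n \<and> mat_inv A * A = 1\<^sub>m n"
  using assms unfolding spd_mat_def by (intro mat_inv_if_trivial_kernel) force+

lemma gram_mat_spd:
  fixes A :: "real mat"
  assumes A: "A \<in> carrier_mat n m"
    and inj: "\<And>x. x \<in> carrier_vec m \<Longrightarrow> A *\<^sub>v x = 0\<^sub>v n \<Longrightarrow> x = 0\<^sub>v m"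
  shows "spd_mat m (transpose_mat A * A)"
  unfolding spd_mat_def
proof (intro conjI ballI impI)
  show "transpose_mat A * A \<in> carrier_mat m m" using A by simp
  show "transpose_mat (transpose_mat A * A) = transpose_mat A * A"
    using transpose_mult[of "transpose_mat A" m n A m] A by simp
  fix x :: "real vec" assume x: "x \<in> carrier_vec m" and x0: "x \<noteq> 0\<^sub>v m"
  have Ax: "A *\<^sub>v x \<in> carrier_vec n" using A x by simp
  have "x \<bullet> ((transpose_mat A * A) *\<^sub>v x) = (A *\<^sub>v x) \<bullet> (A *\<^sub>v x)"
    using assoc_mult_mat_vec[of "transpose_mat A" m n A m x] transpose_vec_mult_scalar[OF A x Ax] A x
    by (simp add: comm_scalar_prod[of _ m])
  also have "\<dots> > 0"
    using conjugate_square_greater_0_vec[OF Ax] inj[OF x] x0 by auto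
  finally show "x \<bullet> ((transpose_mat A * A) *\<^sub>v x) > 0" .
qed

lemma rank_eq_dim_row_if_right_inverse:
  fixes A R :: "real mat"
  assumes A: "A \<in> carrier_mat n m" and R: "R \<in> carrier_mat m n" and AR: "A * R = 1\<^sub>m n"
  shows "vec_space.rank n A = n"
proof -
  interpret vec_space "TYPE(real)" n .
  have cols: "set (cols A) \<subseteq> carrier_vec n" using A cols_dim by blast
  have "carrier_vec n \<subseteq> span (set (cols A))"
  proof
    fix y :: "real vec" assume y: "y \<in> carrier_vec n"
    define w where "w = R *\<^sub>v y"
    have "y = A *\<^sub>v w" unfolding w_def using assoc_mult_mat_vec[OF A R y, symmetric] AR y by simp
    also have "\<dots> = mat_of_cols n (cols A) *\<^sub>v vec (length (cols A)) (\<lambda>i. w $ i)"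
    proof -
      have "vec (length (cols A)) (\<lambda>i. w $ i) = w" using A R y by (intro eq_vecI) (auto simp: w_def)
      then show ?thesis using A mat_of_cols_cols[of A] by simp
    qed
    also have "\<dots> = lincomb_list (\<lambda>i. w $ i) (cols A)"
      by (rule lincomb_list_as_mat_mult[symmetric]) (use cols in auto)
    finally show "y \<in> span (set (cols A))"
      unfolding span_list_as_span[OF cols, symmetric] span_list_def by auto
  qed
  then have "span (set (cols A)) = carrier_vec n" using span_is_subset2[OF cols] by auto
  then have "rank A = vectorspace.dim class_ring (V\<lparr>carrier := carrier_vec n\<rparr>)"
    unfolding rank_def by simp
  also have "V\<lparr>carrier := carrier_vec n\<rparr> = V" by simp
  finally show ?thesis using dim_is_n by simp
qed

lemma full_col_rank_mult_vec_eq_zero: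
  fixes A :: "real mat"
  assumes A: "A \<in> carrier_mat n m" and rk: "vec_space.rank n A = m"
    and x: "x \<in> carrier_vec m" and Ax: "A *\<^sub>v x = 0\<^sub>v n"
  shows "x = 0\<^sub>v m"
proof -
  interpret vec_space "TYPE(real)" n .
  have dist: "distinct (cols A)"
  proof (rule ccontr)
    assume nd: "\<not> distinct (cols A)"
    obtain S where S: "maximal S (\<lambda>T. T \<subseteq> set (cols A) \<and> lin_indpt T)"
      using maximal_exists[of "\<lambda>T. T \<subseteq> set (cols A) \<and> lin_indpt T" "card (set (cols A))" "{}"]
      by (meson List.finite_set card_mono empty_iff empty_subsetI finite_lin_indpt2 rev_finite_subset)
    then have "card S \<le> card (set (cols A))" by (simp add: card_mono maximal_def)
    also have "card (set (cols A)) < length (cols A)"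
      using nd card_length[of "cols A"] card_distinct[of "cols A"] by linarith
    finally have "card S < m" using A by simp
    with rank_card_indpt[OF A S] rk show False by simp
  qed
  show ?thesis
    using lin_depI[OF A x _ Ax dist] full_rank_lin_indpt[OF A rk dist] by blast
qed

lemma full_col_rank_append_cols_inj:
  fixes H G :: "real mat"
  assumes H: "H \<in> carrier_mat N L" and G: "G \<in> carrier_mat N M"
    and rk: "vec_space.rank N (mat_of_cols N (cols H @ cols G)) = L + M"
    and a: "a \<in> carrier_vec L" and d: "d \<in> carrier_vec M" and eq: "H *\<^sub>v a + G *\<^sub>v d = 0\<^sub>v N"
  shows "a = 0\<^sub>v L \<and> d = 0\<^sub>v M"
proof -
  let ?A = "mat_of_cols N (cols H @ cols G)"
  have A: "?A \<in> carrier_mat N (L + M)" using H G by auto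
  have "?A = four_block_mat H G (0\<^sub>m 0 L) (0\<^sub>m 0 M)"
    using H G by (intro eq_matI) (auto simp: mat_of_cols_index nth_append)
  then have "?A *\<^sub>v (a @\<^sub>v d) = (H *\<^sub>v a + G *\<^sub>v d) @\<^sub>v (0\<^sub>m 0 L *\<^sub>v a + 0\<^sub>m 0 M *\<^sub>v d)"
    using four_block_mat_mult_vec[OF H G zero_carrier_mat zero_carrier_mat a d] by simp
  also have "\<dots> = 0\<^sub>v N" unfolding eq by (intro eq_vecI) auto
  finally have "a @\<^sub>v d = 0\<^sub>v (L + M)"
    using full_col_rank_mult_vec_eq_zero[OF A rk] a d by simp
  moreover have "0\<^sub>v (L + M) = 0\<^sub>v L @\<^sub>v (0\<^sub>v M :: real vec)" by (intro eq_vecI) auto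
  ultimately show ?thesis using append_vec_eq[OF a] by simp
qed

section \<open>Complementary orthogonal projections\<close>

lemma assoc_mult_mat4:
  assumes "A \<in> carrier_mat n1 n2" "B \<in> carrier_mat n2 n3" "C \<in> carrier_mat n3 n4"
    "D \<in> carrier_mat n4 n5"
  shows "A * B * C * D = A * (B * (C * D))"
proof -
  have "A * B * C * D = A * B * (C * D)" using assms by (intro assoc_mult_mat[of _ n1 n3 _ n4 _ n5]) auto
  also have "\<dots> = A * (B * (C * D))" using assms by (intro assoc_mult_mat[of _ n1 n2 _ n3 _ n5]) auto
  finally show ?thesis .
qed

lemma mat_eq_one_if_fixes_complementary_cols:
  fixes E X Y :: "real mat"
  assumes E: "E \<in> carrier_mat N N" and X: "X \<in> carrier_mat N k" and Y: "Y \<in> carrier_mat N m"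
    and N: "k + m = N" and EX: "E * X = X" and EY: "E * Y = Y"
    and inj: "\<And>u w. u \<in> carrier_vec k \<Longrightarrow> w \<in> carrier_vec m \<Longrightarrow> X *\<^sub>v u + Y *\<^sub>v w = 0\<^sub>v N \<Longrightarrow>
      u = 0\<^sub>v k \<and> w = 0\<^sub>v m"
  shows "E = 1\<^sub>m N"
proof -
  define Z where "Z = four_block_mat X Y (0\<^sub>m 0 k) (0\<^sub>m 0 m)"
  have Z: "Z \<in> carrier_mat N N" unfolding Z_def using X Y N by auto
  have Z_mult: "Z *\<^sub>v v = X *\<^sub>v vec_first v k + Y *\<^sub>v vec_last v m" if v: "v \<in> carrier_vec N" for v
  proof -
    have "v = vec_first v k @\<^sub>v vec_last v m" using v N by simp
    then have "Z *\<^sub>v v = (X *\<^sub>v vec_first v k + Y *\<^sub>v vec_last v m) @\<^sub>v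
        (0\<^sub>m 0 k *\<^sub>v vec_first v k + 0\<^sub>m 0 m *\<^sub>v vec_last v m)"
      unfolding Z_def
      by (metis four_block_mat_mult_vec[OF X Y zero_carrier_mat zero_carrier_mat] vec_first_carrier
          vec_last_carrier)
    then show ?thesis using X Y by (intro eq_vecI) auto
  qed
  have "v = 0\<^sub>v N" if v: "v \<in> carrier_vec N" and Zv: "Z *\<^sub>v v = 0\<^sub>v N" for v
  proof -
    have "vec_first v k = 0\<^sub>v k \<and> vec_last v m = 0\<^sub>v m"
      using inj[OF vec_first_carrier vec_last_carrier] Zv Z_mult[OF v] by simp
    then have "v = 0\<^sub>v k @\<^sub>v 0\<^sub>v m" using vec_first_last_append[of v k m] v N by simp
    then show ?thesis using N by auto
  qed
  then have ZZ: "Z * mat_inv Z = 1\<^sub>m N" and Zi: "mat_inv Z \<in> carrier_mat N N"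
    using mat_inv_if_trivial_kernel[OF Z] by auto
  show ?thesis
  proof (rule mat_eq_one_if_mult_vec_id[OF E])
    fix v :: "real vec" assume v: "v \<in> carrier_vec N"
    define u where "u = mat_inv Z *\<^sub>v v"
    have u: "u \<in> carrier_vec N" unfolding u_def using Zi v by simp
    have "v = Z *\<^sub>v u" unfolding u_def using assoc_mult_mat_vec[OF Z Zi v] ZZ v by simp
    also have "\<dots> = X *\<^sub>v vec_first u k + Y *\<^sub>v vec_last u m" using Z_mult[OF u] .
    finally have v_eq: "v = X *\<^sub>v vec_first u k + Y *\<^sub>v vec_last u m" .
    have "E *\<^sub>v v = (E * X) *\<^sub>v vec_first u k + (E * Y) *\<^sub>v vec_last u m"
      unfolding v_eq using E X Y
      by (simp add: mult_add_distrib_mat_vec[of _ N N] assoc_mult_mat_vec[of _ N N])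
    then show "E *\<^sub>v v = v" unfolding EX EY v_eq[symmetric] .
  qed
qed

lemma complementary_projections_sum_one:
  fixes A G C K :: "real mat"
  assumes A: "A \<in> carrier_mat k N" and G: "G \<in> carrier_mat N m" and N: "k + m = N"
    and AG: "A * G = 0\<^sub>m k m"
    and C: "C \<in> carrier_mat k k" and CA: "C * (A * transpose_mat A) = 1\<^sub>m k"
    and K: "K \<in> carrier_mat m m" and KG: "K * (transpose_mat G * G) = 1\<^sub>m m"
  shows "transpose_mat A * C * A + G * K * transpose_mat G = 1\<^sub>m N"
proof (rule mat_eq_one_if_fixes_complementary_cols[OF _ transpose_carrier_mat[THEN iffD2, OF A] G N])
  let ?E = "transpose_mat A * C * A + G * K * transpose_mat G"
  have AT: "transpose_mat A \<in> carrier_mat N k" and GT: "transpose_mat G \<in> carrier_mat m N"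
    using A G by simp_all
  have GA: "transpose_mat G * transpose_mat A = 0\<^sub>m m k"
    using transpose_mult[OF A G, symmetric] AG by simp
  show E: "?E \<in> carrier_mat N N" using A G C K by simp
  have "?E * transpose_mat A
      = transpose_mat A * C * A * transpose_mat A + G * K * transpose_mat G * transpose_mat A"
    by (rule add_mult_distrib_mat[of _ N N]) (use AT A C G K GT in auto)
  then show "?E * transpose_mat A = transpose_mat A"
    unfolding assoc_mult_mat4[OF AT C A AT] assoc_mult_mat4[OF G K GT AT] CA GA using AT G K by simp
  have "?E * G = transpose_mat A * C * A * G + G * K * transpose_mat G * G"
    by (rule add_mult_distrib_mat[of _ N N]) (use AT A C G K GT in auto)
  then show "?E * G = G"
    unfolding assoc_mult_mat4[OF AT C A G] assoc_mult_mat4[OF G K GT G] AG KG using AT C G by simp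
  fix u w assume u: "u \<in> carrier_vec k" and w: "w \<in> carrier_vec m"
    and eq: "transpose_mat A *\<^sub>v u + G *\<^sub>v w = 0\<^sub>v N"
  have "0\<^sub>v k = A *\<^sub>v (transpose_mat A *\<^sub>v u + G *\<^sub>v w)" unfolding eq using A by simp
  also have "\<dots> = A *\<^sub>v (transpose_mat A *\<^sub>v u) + A *\<^sub>v (G *\<^sub>v w)"
    using A AT G u w by (intro mult_add_distrib_mat_vec) auto
  also have "\<dots> = (A * transpose_mat A) *\<^sub>v u + (A * G) *\<^sub>v w"
    using A AT G u w by simp
  finally have "(A * transpose_mat A) *\<^sub>v u = 0\<^sub>v k" unfolding AG using A u w by simp
  then have u0: "u = 0\<^sub>v k" using mult_vec_eq_zero_if_left_inverse[OF _ C CA u] A by simp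
  then have "G *\<^sub>v w = 0\<^sub>v N" using eq AT G w by simp
  then have "(transpose_mat G * G) *\<^sub>v w = 0\<^sub>v m" using GT G w by simp
  then have "w = 0\<^sub>v m" using mult_vec_eq_zero_if_left_inverse[OF _ K KG w] G by simp
  with u0 show "u = 0\<^sub>v k \<and> w = 0\<^sub>v m" ..
qed

section \<open>The differencing matrices\<close>

text \<open>Row r of diff_step v j belongs to the r-th index different from j.\<close>
definition skip_index :: "nat \<Rightarrow> nat \<Rightarrow> nat" where
  "skip_index j r = (if r < j then r else Suc r)"

lemma skip_index_neq: "skip_index j r \<noteq> j"
  unfolding skip_index_def by auto

lemma skip_index_eq_iff: "skip_index j r = skip_index j s \<longleftrightarrow> r = s"
  unfolding skip_index_def by auto

lemma skip_index_less: "r < n - 1 \<Longrightarrow> skip_index j r < n"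
  unfolding skip_index_def by auto

lemma diff_step_carrier: "diff_step v j \<in> carrier_mat (dim_vec v - 1) (dim_vec v)"
  unfolding diff_step_def by simp

lemma diff_step_index:
  assumes "r < dim_vec v - 1" "c < dim_vec v"
  shows "diff_step v j $$ (r, c) =
    (let i = skip_index j r in
     if v $ i = 0 then (if c = i then 1 else 0)
     else (if c = i then 1 / v $ i else 0) - (if c = j then 1 / v $ j else 0))"
  using assms unfolding diff_step_def skip_index_def by simp

lemma diff_step_mult_vec_self:
  assumes j: "j < dim_vec v" and vj: "v $ j \<noteq> 0"
  shows "diff_step v j *\<^sub>v v = 0\<^sub>v (dim_vec v - 1)"
proof (rule eq_vecI)
  let ?n = "dim_vec v"
  fix r assume "r < dim_vec (0\<^sub>v (?n - 1) :: real vec)"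
  then have r: "r < ?n - 1" by simp
  define i where "i = skip_index j r"
  have i: "i < ?n" unfolding i_def using skip_index_less[OF r] .
  have "(diff_step v j *\<^sub>v v) $ r = (\<Sum>c\<in>{0..<?n}. diff_step v j $$ (r, c) * v $ c)"
    using r diff_step_carrier[of v j] by (simp add: scalar_prod_def)
  also have "\<dots> = 0"
  proof (cases "v $ i = 0")
    case True
    then have "(\<Sum>c\<in>{0..<?n}. diff_step v j $$ (r, c) * v $ c) = (\<Sum>c\<in>{0..<?n}. if c = i then v $ i else 0)"
      using r by (intro sum.cong) (auto simp: diff_step_index i_def[symmetric])
    then show ?thesis using i True by simp
  next
    case False
    then have "(\<Sum>c\<in>{0..<?n}. diff_step v j $$ (r, c) * v $ c) =
        (\<Sum>c\<in>{0..<?n}. if c = i then 1 else 0) - (\<Sum>c\<in>{0..<?n}. if c = j then 1 else 0)"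
      unfolding sum_subtractf[symmetric] using r vj
      by (intro sum.cong) (auto simp: diff_step_index i_def[symmetric] left_diff_distrib)
    then show ?thesis using i j by simp
  qed
  finally show "(diff_step v j *\<^sub>v v) $ r = 0\<^sub>v (?n - 1) $ r" using r by simp
qed (simp add: diff_step_def)

text \<open>Row r of diff_step v j has the entry 1/v_i in column i = skip_index j r and no other nonzero
  entry outside column j, so scaling the unit vector e_i by v_i gives a right inverse.\<close>
definition diff_step_right_inv :: "real vec \<Rightarrow> nat \<Rightarrow> real mat" where
  "diff_step_right_inv v j = mat (dim_vec v) (dim_vec v - 1) (\<lambda>(c, s).
     let i = skip_index j s in if c = i then (if v $ i = 0 then 1 else v $ i) else 0)"

lemma diff_step_right_inv_carrier:
  "diff_step_right_inv v j \<in> carrier_mat (dim_vec v) (dim_vec v - 1)"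
  unfolding diff_step_right_inv_def by simp

lemma diff_step_mult_right_inv: "diff_step v j * diff_step_right_inv v j = 1\<^sub>m (dim_vec v - 1)"
proof (rule eq_matI)
  let ?n = "dim_vec v"
  fix r s assume "r < dim_row (1\<^sub>m (?n - 1) :: real mat)" "s < dim_col (1\<^sub>m (?n - 1) :: real mat)"
  then have r: "r < ?n - 1" and s: "s < ?n - 1" by auto
  define i where "i = skip_index j s"
  define a where "a = (if v $ i = 0 then 1 else v $ i)"
  have i: "i < ?n" unfolding i_def using skip_index_less[OF s] .
  have "(diff_step v j * diff_step_right_inv v j) $$ (r, s)
      = (\<Sum>c\<in>{0..<?n}. diff_step v j $$ (r, c) * diff_step_right_inv v j $$ (c, s))"
    using r s diff_step_carrier[of v j] diff_step_right_inv_carrier[of v j] by (simp add: scalar_prod_def)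
  also have "\<dots> = (\<Sum>c\<in>{0..<?n}. if c = i then diff_step v j $$ (r, i) * a else 0)"
    using s by (intro sum.cong) (auto simp: diff_step_right_inv_def a_def i_def Let_def)
  also have "\<dots> = diff_step v j $$ (r, i) * a" using i by simp
  also have "\<dots> = 1\<^sub>m (?n - 1) $$ (r, s)"
    using r s i unfolding a_def i_def by (auto simp: diff_step_index skip_index_eq_iff skip_index_neq Let_def)
  finally show "(diff_step v j * diff_step_right_inv v j) $$ (r, s) = 1\<^sub>m (?n - 1) $$ (r, s)" .
qed (use diff_step_carrier[of v j] diff_step_right_inv_carrier[of v j] in auto)

lemma dim_row_diff_G: "dim_row (diff_G js G k) = dim_row G - k"
  by (induction k) (simp_all add: diff_step_def)

lemma diff_G_carrier: "diff_G js G k \<in> carrier_mat (dim_row G - k) (dim_col G)"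
proof -
  have "dim_col (diff_G js G k) = dim_col G" by (induction k) simp_all
  then show ?thesis by (intro carrier_matI) (simp_all add: dim_row_diff_G)
qed

lemma diff_step_of_diff_G_carrier:
  "diff_step (col (diff_G js G k) k) (js (Suc k)) \<in> carrier_mat (dim_row G - Suc k) (dim_row G - k)"
  using diff_step_carrier[of "col (diff_G js G k) k" "js (Suc k)"] by (simp add: dim_row_diff_G)

lemma diff_Gamma_carrier: "diff_Gamma js G k \<in> carrier_mat (dim_row G - k) (dim_row G)"
  by (induction k) (auto intro: mult_carrier_mat[OF diff_step_of_diff_G_carrier])

lemma diff_G_eq_diff_Gamma_mult: "diff_G js G k = diff_Gamma js G k * G"
proof (induction k)
  case (Suc k)
  let ?D = "diff_step (col (diff_G js G k) k) (js (Suc k))"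
  have "diff_G js G (Suc k) = ?D * (diff_Gamma js G k * G)" using Suc.IH by simp
  also have "\<dots> = ?D * diff_Gamma js G k * G"
    using diff_step_of_diff_G_carrier diff_Gamma_carrier carrier_mat_triv
    by (rule assoc_mult_mat[symmetric])
  finally show ?case by simp
qed simp

lemma admissible_refs_step:
  assumes adm: "admissible_refs js G" and k: "k < dim_col G"
  shows "js (Suc k) < dim_row G - k \<and> col (diff_G js G k) k $ js (Suc k) \<noteq> 0 \<and> 2 \<le> dim_row G - k"
proof -
  let ?v = "col (diff_G js G k) k"
  have dim: "dim_vec ?v = dim_row G - k" by (simp add: dim_row_diff_G)
  have "2 \<le> card {i. i < dim_vec ?v \<and> ?v $ i \<noteq> 0}" and "js (Suc k) < dim_vec ?v"
    and "?v $ js (Suc k) \<noteq> 0"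
    using adm k unfolding admissible_refs_def Let_def by auto
  moreover have "card {i. i < dim_vec ?v \<and> ?v $ i \<noteq> 0} \<le> card {0..<dim_vec ?v}"
    by (intro card_mono) auto
  ultimately show ?thesis unfolding dim by simp
qed

lemma admissible_refs_dim_col_le:
  assumes "admissible_refs js G"
  shows "dim_col G \<le> dim_row G"
proof (cases "dim_col G")
  case (Suc m)
  then show ?thesis using admissible_refs_step[OF assms, of m] by auto
qed simp

lemma admissible_refs_col_diff_G_eq_zero:
  assumes adm: "admissible_refs js G"
  shows "k \<le> dim_col G \<Longrightarrow> c < k \<Longrightarrow> col (diff_G js G k) c = 0\<^sub>v (dim_row G - k)"
proof (induction k arbitrary: c)
  case (Suc k)
  let ?v = "col (diff_G js G k) k"
  let ?D = "diff_step ?v (js (Suc k))"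
  have D: "?D \<in> carrier_mat (dim_row G - Suc k) (dim_row G - k)"
    by (rule diff_step_of_diff_G_carrier)
  have Gk: "diff_G js G k \<in> carrier_mat (dim_row G - k) (dim_col G)" by (rule diff_G_carrier)
  have "col (diff_G js G (Suc k)) c = ?D *\<^sub>v col (diff_G js G k) c"
    using col_mult2[OF D Gk] Suc.prems by simp
  also have "\<dots> = 0\<^sub>v (dim_row G - Suc k)"
  proof (cases "c < k")
    case True
    then show ?thesis using Suc D by simp
  next
    case False
    then have "c = k" using Suc.prems by simp
    moreover have "js (Suc k) < dim_vec ?v" "?v $ js (Suc k) \<noteq> 0"
      using admissible_refs_step[OF adm, of k] Suc.prems by (simp_all add: dim_row_diff_G)
    ultimately show ?thesis using diff_step_mult_vec_self by (simp add: dim_row_diff_G)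
  qed
  finally show ?case .
qed simp

lemma admissible_refs_diff_Gamma_mult_eq_zero:
  assumes adm: "admissible_refs js G"
  shows "diff_Gamma js G (dim_col G) * G = 0\<^sub>m (dim_row G - dim_col G) (dim_col G)"
proof (rule eq_matI)
  fix i c assume "i < dim_row (0\<^sub>m (dim_row G - dim_col G) (dim_col G) :: real mat)"
    "c < dim_col (0\<^sub>m (dim_row G - dim_col G) (dim_col G) :: real mat)"
  then have i: "i < dim_row G - dim_col G" and c: "c < dim_col G" by auto
  have "diff_G js G (dim_col G) $$ (i, c) = col (diff_G js G (dim_col G)) c $ i"
    using i c diff_G_carrier[of js G "dim_col G"] by simp
  then show "(diff_Gamma js G (dim_col G) * G) $$ (i, c) = 0\<^sub>m (dim_row G - dim_col G) (dim_col G) $$ (i, c)"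
    using admissible_refs_col_diff_G_eq_zero[OF adm order.refl c] i c
    by (simp flip: diff_G_eq_diff_Gamma_mult)
qed (use diff_Gamma_carrier[of js G "dim_col G"] in auto)

lemma diff_Gamma_right_inverse:
  "\<exists>R. R \<in> carrier_mat (dim_row G) (dim_row G - k) \<and> diff_Gamma js G k * R = 1\<^sub>m (dim_row G - k)"
proof (induction k)
  case 0
  show ?case by (intro exI[of _ "1\<^sub>m (dim_row G)"]) simp
next
  case (Suc k)
  then obtain R where R: "R \<in> carrier_mat (dim_row G) (dim_row G - k)"
    and GR: "diff_Gamma js G k * R = 1\<^sub>m (dim_row G - k)" by blast
  let ?v = "col (diff_G js G k) k"
  let ?D = "diff_step ?v (js (Suc k))"
  let ?R = "diff_step_right_inv ?v (js (Suc k))"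
  have D: "?D \<in> carrier_mat (dim_row G - Suc k) (dim_row G - k)"
    by (rule diff_step_of_diff_G_carrier)
  have RD: "?R \<in> carrier_mat (dim_row G - k) (dim_row G - Suc k)"
    using diff_step_right_inv_carrier[of ?v "js (Suc k)"] by (simp add: dim_row_diff_G)
  have DR: "?D * ?R = 1\<^sub>m (dim_row G - Suc k)"
    using diff_step_mult_right_inv[of ?v "js (Suc k)"] by (simp add: dim_row_diff_G)
  have Gk: "diff_Gamma js G k \<in> carrier_mat (dim_row G - k) (dim_row G)" by (rule diff_Gamma_carrier)
  have "diff_Gamma js G (Suc k) * (R * ?R) = ?D * (diff_Gamma js G k * (R * ?R))"
    unfolding diff_Gamma.simps by (rule assoc_mult_mat[OF D Gk mult_carrier_mat[OF R RD]])
  also have "diff_Gamma js G k * (R * ?R) = (diff_Gamma js G k * R) * ?R"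
    using Gk R RD by (rule assoc_mult_mat[symmetric])
  also have "?D * ((diff_Gamma js G k * R) * ?R) = 1\<^sub>m (dim_row G - Suc k)"
    unfolding GR left_mult_one_mat[OF RD] by (rule DR)
  finally have "diff_Gamma js G (Suc k) * (R * ?R) = 1\<^sub>m (dim_row G - Suc k)" .
  moreover have "R * ?R \<in> carrier_mat (dim_row G) (dim_row G - Suc k)" using R RD by simp
  ultimately show ?case by blast
qed

section \<open>The differential estimate\<close>

lemma right_invertible_gram_spd:
  fixes A R :: "real mat"
  assumes A: "A \<in> carrier_mat k N" and R: "R \<in> carrier_mat N k" and AR: "A * R = 1\<^sub>m k"
  shows "spd_mat k (A * transpose_mat A)"
proof -
  have "transpose_mat R * transpose_mat A = 1\<^sub>m k"
    using transpose_mult[OF A R, symmetric] AR by simp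
  then have "x = 0\<^sub>v k" if "x \<in> carrier_vec k" "transpose_mat A *\<^sub>v x = 0\<^sub>v N" for x
    using mult_vec_eq_zero_if_left_inverse[of "transpose_mat A" N k "transpose_mat R"] A R that by simp
  then show ?thesis using gram_mat_spd[of "transpose_mat A" N k] A by simp
qed

lemma is_inv_sqrt_mat_inv_sqrt:
  assumes "spd_mat n A"
  shows "is_inv_sqrt (mat_inv_sqrt A) A"
  unfolding mat_inv_sqrt_def using theI'[OF spd_mat_inv_sqrt_ex1[OF assms]] .

lemma mat_inv_sqrt_normalization_eq_proj_perp:
  fixes A G :: "real mat"
  assumes A: "A \<in> carrier_mat k N" and G: "G \<in> carrier_mat N m" and N: "k + m = N"
    and AG: "A * G = 0\<^sub>m k m"
    and spd_A: "spd_mat k (A * transpose_mat A)" and spd_G: "spd_mat m (transpose_mat G * G)"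
  defines "P \<equiv> mat_inv_sqrt (A * transpose_mat A) * A"
  shows "P \<in> carrier_mat k N \<and> transpose_mat P * P = proj_perp G"
proof -
  define S where "S = mat_inv_sqrt (A * transpose_mat A)"
  have "is_inv_sqrt S (A * transpose_mat A)"
    unfolding S_def by (rule is_inv_sqrt_mat_inv_sqrt[OF spd_A])
  then have "spd_mat k S" and SS: "S * S * (A * transpose_mat A) = 1\<^sub>m k"
    unfolding is_inv_sqrt_def using A by auto
  then have S: "S \<in> carrier_mat k k" and sym: "transpose_mat S = S"
    unfolding spd_mat_def by auto
  have AT: "transpose_mat A \<in> carrier_mat N k" using A by simp
  have PP: "transpose_mat P * P = transpose_mat A * (S * S) * A"
    unfolding P_def S_def[symmetric] transpose_mult[OF S A] sym
    using A AT S by (simp add: assoc_mult_mat[of _ N k _ k _ N] assoc_mult_mat[of _ k k _ k _ N])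
  obtain K where K: "K \<in> carrier_mat m m" and KG: "K * (transpose_mat G * G) = 1\<^sub>m m"
    and K_def: "K = mat_inv (transpose_mat G * G)"
    using spd_mat_inverse[OF spd_G] by blast
  have sum: "transpose_mat A * (S * S) * A + G * K * transpose_mat G = 1\<^sub>m N"
    using complementary_projections_sum_one[OF A G N AG _ SS K KG] S by simp
  have proj: "proj_perp G = 1\<^sub>m N - G * K * transpose_mat G"
    unfolding proj_perp_def K_def using G by simp
  have "transpose_mat P * P = proj_perp G"
  proof (rule eq_matI)
    fix i j assume "i < dim_row (proj_perp G)" "j < dim_col (proj_perp G)"
    then have "i < N" "j < N" using G unfolding proj by auto
    then show "(transpose_mat P * P) $$ (i, j) = proj_perp G $$ (i, j)"
      unfolding PP proj using arg_cong[OF sum, of "\<lambda>B. B $$ (i, j)"] A G S K by simp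
  qed (use A G S K in \<open>simp_all add: PP proj\<close>)
  moreover have "P \<in> carrier_mat k N" unfolding P_def S_def[symmetric] using S A by simp
  ultimately show ?thesis by blast
qed

lemma full_col_rank_append_cols_gram_spd:
  fixes H G :: "real mat"
  assumes H: "H \<in> carrier_mat N L" and G: "G \<in> carrier_mat N M"
    and rk: "vec_space.rank N (mat_of_cols N (cols H @ cols G)) = L + M"
  shows "spd_mat M (transpose_mat G * G)"
proof (rule gram_mat_spd[OF G])
  fix d :: "real vec" assume d: "d \<in> carrier_vec M" and "G *\<^sub>v d = 0\<^sub>v N"
  then have "H *\<^sub>v 0\<^sub>v L + G *\<^sub>v d = 0\<^sub>v N" using H by simp
  then show "d = 0\<^sub>v M" using full_col_rank_append_cols_inj[OF H G rk zero_carrier_vec d] by blast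
qed

lemma proj_perp_weighted_gram_spd:
  fixes H G P :: "real mat"
  assumes H: "H \<in> carrier_mat N L" and G: "G \<in> carrier_mat N M"
    and rk: "vec_space.rank N (mat_of_cols N (cols H @ cols G)) = L + M"
    and P: "P \<in> carrier_mat k N" and PP: "transpose_mat P * P = proj_perp G"
  shows "spd_mat L (transpose_mat H * proj_perp G * H)"
proof -
  define K where "K = mat_inv (transpose_mat G * G)"
  have K: "K \<in> carrier_mat M M"
    unfolding K_def using spd_mat_inverse[OF full_col_rank_append_cols_gram_spd[OF H G rk]] by blast
  have PT: "transpose_mat P \<in> carrier_mat N k" using P by simp
  have "transpose_mat H * proj_perp G * H = transpose_mat H * ((transpose_mat P * P) * H)"
    unfolding PP[symmetric] by (rule assoc_mult_mat[of _ L N _ N _ L]) (use H P in auto)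
  also have "(transpose_mat P * P) * H = transpose_mat P * (P * H)"
    by (rule assoc_mult_mat[OF PT P H])
  also have "transpose_mat H * (transpose_mat P * (P * H)) = transpose_mat (P * H) * (P * H)"
    unfolding transpose_mult[OF P H] by (rule assoc_mult_mat[symmetric]) (use H P in auto)
  finally have "transpose_mat H * proj_perp G * H = transpose_mat (P * H) * (P * H)" .
  moreover have "spd_mat L (transpose_mat (P * H) * (P * H))"
  proof (rule gram_mat_spd)
    show "P * H \<in> carrier_mat k L" using P H by simp
    fix x :: "real vec" assume x: "x \<in> carrier_vec L" and PHx: "(P * H) *\<^sub>v x = 0\<^sub>v k"
    define y where "y = H *\<^sub>v x"
    define d where "d = K *\<^sub>v (transpose_mat G *\<^sub>v y)"
    have y: "y \<in> carrier_vec N" and d: "d \<in> carrier_vec M" unfolding y_def d_def using H G K x by auto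
    have GT: "transpose_mat G \<in> carrier_mat M N" using G by simp
    have "0\<^sub>v N = transpose_mat P *\<^sub>v ((P * H) *\<^sub>v x)" unfolding PHx using PT by simp
    also have "\<dots> = proj_perp G *\<^sub>v y" unfolding PP[symmetric] y_def using P PT H x by simp
    also have "\<dots> = y - (G * K * transpose_mat G) *\<^sub>v y"
      unfolding proj_perp_def K_def[symmetric] using G K y
      by (simp add: minus_mult_distrib_mat_vec[OF one_carrier_mat _ y])
    also have "(G * K * transpose_mat G) *\<^sub>v y = G *\<^sub>v d"
      unfolding d_def using assoc_mult_mat_vec[OF mult_carrier_mat[OF G K] GT y]
        assoc_mult_mat_vec[OF G K, of "transpose_mat G *\<^sub>v y"] GT y by simp
    finally have "0\<^sub>v N = y - G *\<^sub>v d" .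
    then have "H *\<^sub>v x + G *\<^sub>v (- d) = 0\<^sub>v N"
    proof (intro eq_vecI)
      fix i assume "i < dim_vec (0\<^sub>v N :: real vec)"
      then have "i < N" by simp
      then show "(H *\<^sub>v x + G *\<^sub>v (- d)) $ i = 0\<^sub>v N $ i"
        using arg_cong[OF \<open>0\<^sub>v N = y - G *\<^sub>v d\<close>, of "\<lambda>v. v $ i"] H G x d unfolding y_def by simp
    qed (use H in simp)
    then show "x = 0\<^sub>v L" using full_col_rank_append_cols_inj[OF H G rk x, of "- d"] d by simp
  qed
  ultimately show ?thesis by simp
qed

lemma mult_transpose_weight_assoc:
  fixes H P B :: "real mat"
  assumes H: "H \<in> carrier_mat N L" and P: "P \<in> carrier_mat k N" and B: "B \<in> carrier_mat n L"
  shows "transpose_mat H * transpose_mat P * P * H = transpose_mat H * (transpose_mat P * P) * H"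
    and "B * transpose_mat H * transpose_mat P * P = B * transpose_mat H * (transpose_mat P * P)"
proof -
  have PT: "transpose_mat P \<in> carrier_mat N k" and HT: "transpose_mat H \<in> carrier_mat L N"
    using P H by simp_all
  show "transpose_mat H * transpose_mat P * P * H = transpose_mat H * (transpose_mat P * P) * H"
    using assoc_mult_mat[OF HT PT P] by simp
  have "B * transpose_mat H * transpose_mat P * P = B * (transpose_mat H * (transpose_mat P * P))"
    by (rule assoc_mult_mat4[OF B HT PT P])
  also have "\<dots> = B * transpose_mat H * (transpose_mat P * P)"
    by (rule assoc_mult_mat[symmetric]) (use B HT PT P in auto)
  finally show "B * transpose_mat H * transpose_mat P * P = B * transpose_mat H * (transpose_mat P * P)" .
qed

theorem mainTheorem4:
  fixes H G :: "real mat" and N L M :: nat and js :: "nat \<Rightarrow> nat"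
  assumes H: "H \<in> carrier_mat N L"
    and G: "G \<in> carrier_mat N M"
    and rk: "vec_space.rank N (mat_of_cols N (cols H @ cols G)) = L + M"
    and adm: "admissible_refs js G"
  defines "\<Gamma> \<equiv> diff_Gamma js G M"
  defines "P \<equiv> mat_inv_sqrt (\<Gamma> * transpose_mat \<Gamma>) * \<Gamma>"
  shows "\<Gamma> \<in> carrier_mat (N - M) N \<and>
           vec_space.rank (N - M) \<Gamma> = N - M \<and>
           \<Gamma> * G = 0\<^sub>m (N - M) M \<and>
           (\<exists>!S. is_inv_sqrt S (\<Gamma> * transpose_mat \<Gamma>)) \<and>
           invertible_mat (transpose_mat H * transpose_mat P * P * H) \<and>
           invertible_mat (transpose_mat G * G) \<and>
           invertible_mat (transpose_mat H * proj_perp G * H) \<and>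
           (\<forall>y \<in> carrier_vec N.
           mat_inv (transpose_mat H * transpose_mat P * P * H) * transpose_mat H * transpose_mat P * P *\<^sub>v y
         = mat_inv (transpose_mat H * proj_perp G * H) * transpose_mat H * proj_perp G *\<^sub>v y)"
proof -
  have dims: "dim_row G = N" "dim_col G = M" using G by auto
  have Gam: "\<Gamma> \<in> carrier_mat (N - M) N"
    unfolding \<Gamma>_def using diff_Gamma_carrier[of js G M] dims by simp
  obtain R where R: "R \<in> carrier_mat N (N - M)" and GamR: "\<Gamma> * R = 1\<^sub>m (N - M)"
    unfolding \<Gamma>_def using diff_Gamma_right_inverse[of G M js] dims by auto
  have GamG: "\<Gamma> * G = 0\<^sub>m (N - M) M"
    unfolding \<Gamma>_def using admissible_refs_diff_Gamma_mult_eq_zero[OF adm] dims by simp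
  have NM: "N - M + M = N" using admissible_refs_dim_col_le[OF adm] dims by simp
  have spd_Gam: "spd_mat (N - M) (\<Gamma> * transpose_mat \<Gamma>)" by (rule right_invertible_gram_spd[OF Gam R GamR])
  have spd_G: "spd_mat M (transpose_mat G * G)" by (rule full_col_rank_append_cols_gram_spd[OF H G rk])
  have P: "P \<in> carrier_mat (N - M) N" and PP: "transpose_mat P * P = proj_perp G"
    using mat_inv_sqrt_normalization_eq_proj_perp[OF Gam G NM GamG spd_Gam spd_G] unfolding P_def by auto
  have X: "invertible_mat (transpose_mat H * proj_perp G * H) \<and>
      mat_inv (transpose_mat H * proj_perp G * H) \<in> carrier_mat L L"
    using spd_mat_inverse[OF proj_perp_weighted_gram_spd[OF H G rk P PP]] by blast
  show ?thesis
    using Gam rank_eq_dim_row_if_right_inverse[OF Gam R GamR] GamG spd_mat_inv_sqrt_ex1[OF spd_Gam]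
      spd_mat_inverse[OF spd_G] X mult_transpose_weight_assoc[OF H P conjunct2[OF X]] unfolding PP by simp
qed

end
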